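(* Assume $f^*$ is additive. Suppose $\pi_g,\pi_p>0$, and suppose the proposal contains a trivial move (returning the current state) that is selected with some probability $\pi_0>0$. Suppose $p_{\mathrm{TSE}}$ has full support, and let $m,\sigma^2,\lambda$ be arbitrary. If $r\ge\mathrm{diam}(\Omega_{\mathrm{TSE},m})$, then for any tolerance $\varepsilon>0$, the lazification of the Markov chain induced by BART+ with $r$-step proposals and temperature $T=1$ has $\varepsilon$-mixing time satisfying $$t_{\mathrm{mix}}(\varepsilon)=O_{\mathbb P}(1).$$
   Context: Data: $\mathcal X=\{1,\dots,B\}^d$; $\nu$ a full-support probability measure on $\mathcal X$; $\epsilon$ a (centered) sub-Gaussian random variable; training data are $n$ i.i.d. pairs $(\mathbf x_i,y_i)$, $\mathbf x_i\sim\nu$, $y_i=f^*(\mathbf x_i)+\epsilon_i$, noise independent of covariates; $\mathbb P_n$ is probability over the data. $f^*$ is additive if $f^*(\mathbf x)=f_1(x_1)+\cdots+f_{m'}(x_{m'})$ for some $2\le m'\le d$ and univariate $f_i$. Trees: a tree structure is a finite rooted binary tree with axis-aligned splitting rules at internal nodes (children $\{x_v\le t\}$, $\{x_v>t\}$ of the parent's cell, both nonempty). $\Omega_{\mathrm{TSE},m}$ is the finite set of TSEs $\mathfrak E=(\mathfrak T_1,\dots,\mathfrak T_m)$. Bayesian model: given $\mathfrak E$ with $b$ leaves, $\boldsymbol\Psi$ is the $n\times b$ leaf-indicator matrix over training points, $\boldsymbol\mu\sim N(0,(\sigma^2/\lambda)\mathbf I_b)$, $\mathbf y=\boldsymbol\Psi\boldsymbol\mu+\mathbf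 e$, $\mathbf e\sim N(0,\sigma^2\mathbf I_n)$; prior $p=p_{\mathrm{TSE}}$; marginal likelihood $p(\mathbf y\mid\mathfrak E)$; posterior $p(\mathfrak E\mid\mathbf y)\propto p(\mathbf y\mid\mathfrak E)p(\mathfrak E)$. Proposal: on tree structures, with probabilities $\pi_g,\pi_p,\pi_c,\pi_s$ (and here also a trivial move with probability $\pi_0$) propose grow (split a leaf), prune (collapse two sibling leaves), change (change an internal node's rule), or swap (swap rules of a parent–child pair of internal nodes, or if both children share a rule, swap parent's rule with both children's), choices uniform, empty leaves disallowed. On ensembles, $Q(\mathfrak E,\mathfrak E')$ is the probability of proposing $\mathfrak E'$ from $\mathfrak E$ by choosing a tree index uniformly at random and applying the tree proposal to that tree. $Q^r(\mathfrak E,\mathfrak E')=\sum_{\mathfrak E_1,\dots,\mathfrak E_{r-1}}Q(\mathfrak E,\mathfrak E_1)\prod_{i=2}^{r-1}Q(\mathfrak E_{i-1},\mathfrak E_i)Q(\mathfrak E_{r-1},\mathfrak E')$ is the $r$-step proposal. $\mathrm{diam}(\Omega_{\mathrm{TSE},m})$ is the diameter of the graph on $\Omega_{\mathrm{TSE},m}$ with an edge between $\mathfrak E,\mathfrak E'$ when $Q(\mathfrak E,\mathfrak E')>0$. BART+ with $r$ steps and temperature $T$: Markov chain on $\Omega_{\mathrm{TSE},m}$ with transition matrix $P$ that proposes $\mathfrak E'\sim Q^r(\mathfrak E,\cdot)$ and accepts with probability $\min\big\{\frac{Q^r(\mathfrak E',\mathfrak E)p(\mathfrak E')}{Q^r(\mathfrak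 E,\mathfrak E')p(\mathfrak E)}\big(\frac{p(\mathbf y\mid\mathfrak E')}{p(\mathbf y\mid\mathfrak E)}\big)^{1/T},1\big\}$. Its lazification has transition matrix $\tilde P=(P+I)/2$; with stationary distribution $\pi$, $t_{\mathrm{mix}}(\varepsilon)=\min\{t\ge0:\max_x\|\tilde P^t(x,\cdot)-\pi\|_{\mathrm{TV}}\le\varepsilon\}$. $a_n=O_{\mathbb P}(b_n)$: for every $0<\delta<1$ there are $N,C>0$ with $\sup_{n>N}\mathbb P_n\{|a_n/b_n|>C\}<\delta$. *)

theory Defs
  imports "HOL-Probability.Probability" "Jordan_Normal_Form.Gauss_Jordan_Elimination"
    "Jordan_Normal_Form.Determinant"
begin

text \<open>A point of X = {1..B}^d is a list of length d with entries in {1..B};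
  coordinate v (0-based, v < d) is x ! v.\<close>

definition Xset :: "nat \<Rightarrow> nat \<Rightarrow> nat list set" where
  "Xset B d = {x. length x = d \<and> (\<forall>i<d. x ! i \<in> {1..B})}"

text \<open>A splitting rule (v,t) sends the left child to {x_v <= t}, the right to {x_v > t}.\<close>
datatype tree = Leaf | Node "nat \<times> nat" tree tree

definition le_set :: "nat \<times> nat \<Rightarrow> nat list set" where
  "le_set \<rho> = {x. x ! fst \<rho> \<le> snd \<rho>}"

definition gt_set :: "nat \<times> nat \<Rightarrow> nat list set" where
  "gt_set \<rho> = {x. x ! fst \<rho> > snd \<rho>}"

fun valid_in :: "nat \<Rightarrow> nat list set \<Rightarrow> tree \<Rightarrow> bool" where
  "valid_in d C Leaf = True"
| "valid_in d C (Node \<rho> l r) =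
     (fst \<rho> < d \<and> C \<inter> le_set \<rho> \<noteq> {} \<and> C \<inter> gt_set \<rho> \<noteq> {}
      \<and> valid_in d (C \<inter> le_set \<rho>) l \<and> valid_in d (C \<inter> gt_set \<rho>) r)"

definition valid_tree :: "nat \<Rightarrow> nat \<Rightarrow> tree \<Rightarrow> bool" where
  "valid_tree B d T = valid_in d (Xset B d) T"

definition TSE_space :: "nat \<Rightarrow> nat \<Rightarrow> nat \<Rightarrow> tree list set" where
  "TSE_space B d m = {E. length E = m \<and> (\<forall>T\<in>set E. valid_tree B d T)}"

fun leaf_cells :: "nat list set \<Rightarrow> tree \<Rightarrow> nat list set list" where
  "leaf_cells C Leaf = [C]"
| "leaf_cells C (Node \<rho> l r) = leaf_cells (C \<inter> le_set \<rho>) l @ leaf_cells (C \<inter> gt_set \<rho>) r"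

definition ens_cells :: "nat \<Rightarrow> nat \<Rightarrow> tree list \<Rightarrow> nat list set list" where
  "ens_cells B d E = concat (map (leaf_cells (Xset B d)) E)"

section \<open>Positions in a tree (paths; False = left child, True = right child)\<close>

fun subtree :: "tree \<Rightarrow> bool list \<Rightarrow> tree" where
  "subtree T [] = T"
| "subtree Leaf (b # p) = Leaf"
| "subtree (Node \<rho> l r) (b # p) = subtree (if b then r else l) p"

fun replace :: "tree \<Rightarrow> bool list \<Rightarrow> tree \<Rightarrow> tree" where
  "replace T [] S = S"
| "replace Leaf (b # p) S = Leaf"
| "replace (Node \<rho> l r) (b # p) S =
     (if b then Node \<rho> l (replace r p S) else Node \<rho> (replace l p S) r)"

fun paths :: "tree \<Rightarrow> bool list set" where
  "paths Leaf = {[]}"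
| "paths (Node \<rho> l r) = insert [] ((\<lambda>p. False # p) ` paths l \<union> (\<lambda>p. True # p) ` paths r)"

definition leaf_paths :: "tree \<Rightarrow> bool list set" where
  "leaf_paths T = {p \<in> paths T. subtree T p = Leaf}"

definition int_paths :: "tree \<Rightarrow> bool list set" where
  "int_paths T = {p \<in> paths T. subtree T p \<noteq> Leaf}"

fun rule_of :: "tree \<Rightarrow> nat \<times> nat" where
  "rule_of Leaf = (0, 0)"
| "rule_of (Node \<rho> l r) = \<rho>"

fun set_rule :: "tree \<Rightarrow> nat \<times> nat \<Rightarrow> tree" where
  "set_rule Leaf \<rho> = Leaf"
| "set_rule (Node \<sigma> l r) \<rho> = Node \<rho> l r"

definition set_rule_at :: "tree \<Rightarrow> bool list \<Rightarrow> nat \<times> nat \<Rightarrow> tree" where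
  "set_rule_at T p \<rho> = replace T p (set_rule (subtree T p) \<rho>)"

text \<open>Candidate rules (a finite superset of all rules that can give two nonempty children).\<close>
definition rules :: "nat \<Rightarrow> nat \<Rightarrow> (nat \<times> nat) set" where
  "rules B d = {..<d} \<times> {..<B}"

definition grow_rules :: "nat \<Rightarrow> nat \<Rightarrow> tree \<Rightarrow> bool list \<Rightarrow> (nat \<times> nat) set" where
  "grow_rules B d T p = {\<rho> \<in> rules B d. valid_tree B d (replace T p (Node \<rho> Leaf Leaf))}"

definition growable :: "nat \<Rightarrow> nat \<Rightarrow> tree \<Rightarrow> bool list set" where
  "growable B d T = {p \<in> leaf_paths T. grow_rules B d T p \<noteq> {}}"

definition grow_prop :: "nat \<Rightarrow> nat \<Rightarrow> tree \<Rightarrow> tree pmf" where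
  "grow_prop B d T =
     (if growable B d T = {} then return_pmf T
      else bind_pmf (pmf_of_set (growable B d T))
        (\<lambda>p. map_pmf (\<lambda>\<rho>. replace T p (Node \<rho> Leaf Leaf)) (pmf_of_set (grow_rules B d T p))))"

definition prunable :: "tree \<Rightarrow> bool list set" where
  "prunable T = {p \<in> int_paths T. subtree T (p @ [False]) = Leaf \<and> subtree T (p @ [True]) = Leaf}"

definition prune_prop :: "tree \<Rightarrow> tree pmf" where
  "prune_prop T =
     (if prunable T = {} then return_pmf T
      else map_pmf (\<lambda>p. replace T p Leaf) (pmf_of_set (prunable T)))"

definition change_rules :: "nat \<Rightarrow> nat \<Rightarrow> tree \<Rightarrow> bool list \<Rightarrow> (nat \<times> nat) set" where
  "change_rules B d T p =
     {\<rho> \<in> rules B d. \<rho> \<noteq> rule_of (subtree T p) \<and> valid_tree B d (set_rule_at T p \<rho>)}"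

definition changeable :: "nat \<Rightarrow> nat \<Rightarrow> tree \<Rightarrow> bool list set" where
  "changeable B d T = {p \<in> int_paths T. change_rules B d T p \<noteq> {}}"

definition change_prop :: "nat \<Rightarrow> nat \<Rightarrow> tree \<Rightarrow> tree pmf" where
  "change_prop B d T =
     (if changeable B d T = {} then return_pmf T
      else bind_pmf (pmf_of_set (changeable B d T))
        (\<lambda>p. map_pmf (\<lambda>\<rho>. set_rule_at T p \<rho>) (pmf_of_set (change_rules B d T p))))"

definition swap_result :: "tree \<Rightarrow> bool list \<Rightarrow> bool \<Rightarrow> tree" where
  "swap_result T p b =
     (let \<rho>p = rule_of (subtree T p); l = subtree T (p @ [False]); r = subtree T (p @ [True]) in
      if l \<noteq> Leaf \<and> r \<noteq> Leaf \<and> rule_of l = rule_of r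
      then set_rule_at (set_rule_at (set_rule_at T p (rule_of l)) (p @ [False]) \<rho>p) (p @ [True]) \<rho>p
      else set_rule_at (set_rule_at T p (rule_of (subtree T (p @ [b])))) (p @ [b]) \<rho>p)"

definition swap_pairs :: "nat \<Rightarrow> nat \<Rightarrow> tree \<Rightarrow> (bool list \<times> bool) set" where
  "swap_pairs B d T = {(p, b). p \<in> int_paths T \<and> p @ [b] \<in> int_paths T
                               \<and> valid_tree B d (swap_result T p b)}"

definition swap_prop :: "nat \<Rightarrow> nat \<Rightarrow> tree \<Rightarrow> tree pmf" where
  "swap_prop B d T =
     (if swap_pairs B d T = {} then return_pmf T
      else map_pmf (\<lambda>(p, b). swap_result T p b) (pmf_of_set (swap_pairs B d T)))"

text \<open>Move type: 0 trivial, 1 grow, 2 prune, 3 change, 4 swap.\<close>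
definition move_pmf :: "real \<Rightarrow> real \<Rightarrow> real \<Rightarrow> real \<Rightarrow> real \<Rightarrow> nat pmf" where
  "move_pmf p0 pg pp pc ps = embed_pmf (\<lambda>k. if k = 0 then p0 else if k = 1 then pg
      else if k = 2 then pp else if k = 3 then pc else if k = 4 then ps else 0)"

definition tree_prop :: "nat \<Rightarrow> nat \<Rightarrow> real \<Rightarrow> real \<Rightarrow> real \<Rightarrow> real \<Rightarrow> real \<Rightarrow> tree \<Rightarrow> tree pmf" where
  "tree_prop B d p0 pg pp pc ps T = bind_pmf (move_pmf p0 pg pp pc ps)
     (\<lambda>k. if k = 1 then grow_prop B d T else if k = 2 then prune_prop T
          else if k = 3 then change_prop B d T else if k = 4 then swap_prop B d T
          else return_pmf T)"

definition ens_prop :: "nat \<Rightarrow> nat \<Rightarrow> real \<Rightarrow> real \<Rightarrow> real \<Rightarrow> real \<Rightarrow> real \<Rightarrow> tree list \<Rightarrow> tree list pmf" where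
  "ens_prop B d p0 pg pp pc ps E = bind_pmf (pmf_of_set {..<length E})
     (\<lambda>i. map_pmf (\<lambda>T. E[i := T]) (tree_prop B d p0 pg pp pc ps (E ! i)))"

fun ens_prop_pow :: "nat \<Rightarrow> nat \<Rightarrow> real \<Rightarrow> real \<Rightarrow> real \<Rightarrow> real \<Rightarrow> real \<Rightarrow> nat \<Rightarrow> tree list \<Rightarrow> tree list pmf" where
  "ens_prop_pow B d p0 pg pp pc ps 0 E = return_pmf E"
| "ens_prop_pow B d p0 pg pp pc ps (Suc r) E =
     bind_pmf (ens_prop_pow B d p0 pg pp pc ps r E) (ens_prop B d p0 pg pp pc ps)"

definition prop_edges :: "nat \<Rightarrow> nat \<Rightarrow> real \<Rightarrow> real \<Rightarrow> real \<Rightarrow> real \<Rightarrow> real \<Rightarrow> nat \<Rightarrow> (tree list \<times> tree list) set" where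
  "prop_edges B d p0 pg pp pc ps m =
     {(E, E'). E \<in> TSE_space B d m \<and> E' \<in> TSE_space B d m \<and>
        (pmf (ens_prop B d p0 pg pp pc ps E) E' > 0 \<or> pmf (ens_prop B d p0 pg pp pc ps E') E > 0)}"

text \<open>Graph distance (infinite if not connected) and diameter, valued in enat.\<close>
definition graph_dist :: "('a \<times> 'a) set \<Rightarrow> 'a \<Rightarrow> 'a \<Rightarrow> enat" where
  "graph_dist R x y = (INF k \<in> {k. (x, y) \<in> R ^^ k}. enat k)"

definition tse_diam :: "nat \<Rightarrow> nat \<Rightarrow> real \<Rightarrow> real \<Rightarrow> real \<Rightarrow> real \<Rightarrow> real \<Rightarrow> nat \<Rightarrow> enat" where
  "tse_diam B d p0 pg pp pc ps m =
     (SUP x \<in> TSE_space B d m \<times> TSE_space B d m.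
        graph_dist (prop_edges B d p0 pg pp pc ps m) (fst x) (snd x))"

definition design_mat :: "nat \<Rightarrow> (nat \<Rightarrow> nat list) \<Rightarrow> nat list set list \<Rightarrow> real mat" where
  "design_mat n xs cells = mat n (length cells) (\<lambda>(i, j). if xs i \<in> cells ! j then 1 else 0)"

text \<open>y ~ N(0, sigma^2 (I_n + lambda^{-1} Psi Psi^T)), the marginal of
  y = Psi mu + e, mu ~ N(0, sigma^2/lambda I_b), e ~ N(0, sigma^2 I_n).\<close>
definition marg_lik :: "real \<Rightarrow> real \<Rightarrow> nat \<Rightarrow> (nat \<Rightarrow> nat list) \<Rightarrow> (nat \<Rightarrow> real) \<Rightarrow> nat list set list \<Rightarrow> real" where
  "marg_lik s2 lam n xs ys cells =
     (let Psi = design_mat n xs cells;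
          Sig = s2 \<cdot>\<^sub>m (1\<^sub>m n + (1 / lam) \<cdot>\<^sub>m (Psi * transpose_mat Psi));
          yv = vec n ys
      in (2 * pi) powr (- (real n / 2)) * Determinant.det Sig powr (- 1 / 2)
         * exp (- (1 / 2) * scalar_prod yv (the (mat_inverse Sig) *\<^sub>v yv)))"

definition lazify :: "('a \<Rightarrow> 'a pmf) \<Rightarrow> 'a \<Rightarrow> 'a pmf" where
  "lazify K x = bind_pmf (bernoulli_pmf (1 / 2)) (\<lambda>b. if b then K x else return_pmf x)"

definition kernel_pow :: "('a \<Rightarrow> 'a pmf) \<Rightarrow> nat \<Rightarrow> 'a \<Rightarrow> 'a pmf" where
  "kernel_pow K t x = ((\<lambda>\<mu>. bind_pmf \<mu> K) ^^ t) (return_pmf x)"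

definition tv_dist :: "'a pmf \<Rightarrow> 'a pmf \<Rightarrow> real" where
  "tv_dist \<mu> \<nu> = (SUP A. \<bar>measure_pmf.prob \<mu> A - measure_pmf.prob \<nu> A\<bar>)"

definition mix_time :: "('a \<Rightarrow> 'a pmf) \<Rightarrow> 'a set \<Rightarrow> 'a pmf \<Rightarrow> real \<Rightarrow> enat" where
  "mix_time K S \<pi> eps = (INF t \<in> {t. \<forall>x\<in>S. tv_dist (kernel_pow K t x) \<pi> \<le> eps}. enat t)"

text \<open>Training data D: D i = (x_i, y_i) for i < n.\<close>
definition data_lik :: "nat \<Rightarrow> nat \<Rightarrow> real \<Rightarrow> real \<Rightarrow> nat \<Rightarrow> (nat \<Rightarrow> nat list \<times> real) \<Rightarrow> tree list \<Rightarrow> real" where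
  "data_lik B d s2 lam n D E = marg_lik s2 lam n (\<lambda>i. fst (D i)) (\<lambda>i. snd (D i)) (ens_cells B d E)"

definition bart_kernel :: "nat \<Rightarrow> nat \<Rightarrow> real \<Rightarrow> real \<Rightarrow> real \<Rightarrow> real \<Rightarrow> real \<Rightarrow> nat \<Rightarrow> real
     \<Rightarrow> tree list pmf \<Rightarrow> real \<Rightarrow> real \<Rightarrow> nat \<Rightarrow> (nat \<Rightarrow> nat list \<times> real) \<Rightarrow> tree list \<Rightarrow> tree list pmf" where
  "bart_kernel B d p0 pg pp pc ps r Temp prior s2 lam n D E =
     (let Q = ens_prop_pow B d p0 pg pp pc ps r; L = data_lik B d s2 lam n D in
      bind_pmf (Q E) (\<lambda>E'. map_pmf (\<lambda>acc. if acc then E' else E)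
        (bernoulli_pmf (min ((pmf (Q E') E * pmf prior E') / (pmf (Q E) E' * pmf prior E)
                              * (L E' / L E) powr (1 / Temp)) 1))))"

definition tempered_post :: "nat \<Rightarrow> nat \<Rightarrow> real \<Rightarrow> tree list pmf \<Rightarrow> real \<Rightarrow> real \<Rightarrow> nat
     \<Rightarrow> (nat \<Rightarrow> nat list \<times> real) \<Rightarrow> tree list pmf" where
  "tempered_post B d Temp prior s2 lam n D =
     embed_pmf (\<lambda>E. pmf prior E * data_lik B d s2 lam n D E powr (1 / Temp)
        / (\<Sum>E'\<in>set_pmf prior. pmf prior E' * data_lik B d s2 lam n D E' powr (1 / Temp)))"

definition bart_mix_time :: "nat \<Rightarrow> nat \<Rightarrow> real \<Rightarrow> real \<Rightarrow> real \<Rightarrow> real \<Rightarrow> real \<Rightarrow> nat \<Rightarrow> nat \<Rightarrow> real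
     \<Rightarrow> tree list pmf \<Rightarrow> real \<Rightarrow> real \<Rightarrow> real \<Rightarrow> nat \<Rightarrow> (nat \<Rightarrow> nat list \<times> real) \<Rightarrow> enat" where
  "bart_mix_time B d p0 pg pp pc ps m r Temp prior s2 lam eps n D =
     mix_time (lazify (bart_kernel B d p0 pg pp pc ps r Temp prior s2 lam n D))
       (TSE_space B d m) (tempered_post B d Temp prior s2 lam n D) eps"

definition additive :: "nat \<Rightarrow> nat \<Rightarrow> (nat list \<Rightarrow> real) \<Rightarrow> bool" where
  "additive B d f \<longleftrightarrow> (\<exists>m' (fs :: nat \<Rightarrow> nat \<Rightarrow> real). 2 \<le> m' \<and> m' \<le> d \<and>
      (\<forall>x\<in>Xset B d. f x = (\<Sum>i<m'. fs i (x ! i))))"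

definition centered_subgaussian :: "real measure \<Rightarrow> bool" where
  "centered_subgaussian N \<longleftrightarrow> prob_space N \<and> sets N = sets borel \<and> integrable N (\<lambda>e. e)
     \<and> (\<integral>e. e \<partial>N) = 0 \<and>
     (\<exists>s. \<forall>t::real. integrable N (\<lambda>e. exp (t * e)) \<and> (\<integral>e. exp (t * e) \<partial>N) \<le> exp (s\<^sup>2 * t\<^sup>2 / 2))"

definition sample_dist :: "nat list pmf \<Rightarrow> real measure \<Rightarrow> (nat list \<Rightarrow> real) \<Rightarrow> (nat list \<times> real) measure" where
  "sample_dist \<nu> N f = distr (measure_pmf \<nu> \<Otimes>\<^sub>M N) (count_space UNIV \<Otimes>\<^sub>M borel) (\<lambda>(x, e). (x, f x + e))"

definition data_measure :: "nat \<Rightarrow> nat list pmf \<Rightarrow> real measure \<Rightarrow> (nat list \<Rightarrow> real)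
     \<Rightarrow> (nat \<Rightarrow> nat list \<times> real) measure" where
  "data_measure n \<nu> N f = PiM {..<n} (\<lambda>_. sample_dist \<nu> N f)"

end

theory Submission
  imports Defs
begin

text \<open>Once r is at least the diameter of the proposal graph, the r-step proposal Q^r charges
  every pair of ensembles: grow and prune undo each other and change and swap undo themselves,
  so every edge of the graph can be followed forwards, and the trivial move pads shorter paths
  to length exactly r. On the finite state space Q^r is therefore bounded below by some q > 0.
  For the Metropolis-Hastings chain the flow pi(E) P(E, E') is
  min(pi(E) Q^r(E, E'), pi(E') Q^r(E', E)) >= q pi(E) pi(E'), so the lazy chain satisfies
  Doeblin's condition P(E, .) >= (q/2) pi, and its distance to stationarity is at most
  (1 - q/2)^t. None of this depends on the data, hence t_mix(eps) is bounded by a constant,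
  which is much stronger than O_P(1).\<close>


section \<open>Doeblin's bound for finite Markov chains\<close>

lemma measure_pmf_prob_eq_sum:
  assumes "finite S" "set_pmf \<mu> \<subseteq> S"
  shows "measure_pmf.prob \<mu> A = (\<Sum>y\<in>A \<inter> S. pmf \<mu> y)"
proof -
  have "measure_pmf.prob \<mu> A = measure_pmf.prob \<mu> (A \<inter> set_pmf \<mu>)"
    by (simp add: measure_Int_set_pmf)
  also have "A \<inter> set_pmf \<mu> = (A \<inter> S) \<inter> set_pmf \<mu>"
    using assms(2) by auto
  also have "measure_pmf.prob \<mu> \<dots> = (\<Sum>y\<in>A \<inter> S. pmf \<mu> y)"
    using assms(1) by (simp add: measure_Int_set_pmf measure_measure_pmf_finite)
  finally show ?thesis .
qed

lemma tv_dist_le_if_pmf_ge: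
  assumes fin: "finite S" and "set_pmf \<mu> \<subseteq> S" "set_pmf \<pi> \<subseteq> S"
    and ge: "\<forall>y\<in>S. \<beta> * pmf \<pi> y \<le> pmf \<mu> y" and "0 \<le> \<beta>" "\<beta> \<le> 1"
  shows "tv_dist \<mu> \<pi> \<le> 1 - \<beta>"
  unfolding tv_dist_def
proof (rule cSUP_least)
  fix A
  let ?a = "\<Sum>y\<in>A \<inter> S. pmf \<mu> y" and ?b = "\<Sum>y\<in>A \<inter> S. pmf \<pi> y"
  let ?a' = "\<Sum>y\<in>S - A. pmf \<mu> y" and ?b' = "\<Sum>y\<in>S - A. pmf \<pi> y"
  have sums: "?a + ?a' = 1" "?b + ?b' = 1"
    using sum_pmf_eq_1[OF fin assms(2)] sum_pmf_eq_1[OF fin assms(3)]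
      sum.Int_Diff[OF fin, of "pmf \<mu>" A] sum.Int_Diff[OF fin, of "pmf \<pi>" A]
    by (simp_all add: Int_commute)
  have "\<beta> * ?b \<le> ?a" "\<beta> * ?b' \<le> ?a'"
    unfolding sum_distrib_left by (rule sum_mono; use ge in auto)+
  moreover have "0 \<le> ?b" "0 \<le> ?b'"
    by (simp_all add: sum_nonneg)
  then have "(1 - \<beta>) * ?b \<le> 1 - \<beta>" "(1 - \<beta>) * ?b' \<le> 1 - \<beta>"
    using sums \<open>\<beta> \<le> 1\<close> by (intro mult_left_le; linarith)+
  ultimately have "\<bar>?a - ?b\<bar> \<le> 1 - \<beta>"
    using sums unfolding abs_le_iff left_diff_distrib by linarith
  then show "\<bar>measure_pmf.prob \<mu> A - measure_pmf.prob \<pi> A\<bar> \<le> 1 - \<beta>"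
    using measure_pmf_prob_eq_sum[OF fin assms(2), of A] measure_pmf_prob_eq_sum[OF fin assms(3), of A]
    by simp
qed simp

lemma kernel_pow_Suc: "kernel_pow K (Suc t) x = bind_pmf (kernel_pow K t x) K"
  by (simp add: kernel_pow_def)

text \<open>Doeblin's coupling argument in analytic form: the part of the law of the chain that
  already agrees with \<pi> stays stationary, and every step converts a fraction \<alpha> of the rest.\<close>
lemma kernel_pow_ge_stationary:
  fixes K :: "'a \<Rightarrow> 'a pmf"
  assumes fin: "finite S" and sp: "set_pmf \<pi> \<subseteq> S" and sk: "\<forall>x\<in>S. set_pmf (K x) \<subseteq> S"
    and stat: "\<forall>y\<in>S. (\<Sum>z\<in>S. pmf \<pi> z * pmf (K z) y) = pmf \<pi> y"
    and minor: "\<forall>x\<in>S. \<forall>y\<in>S. \<alpha> * pmf \<pi> y \<le> pmf (K x) y" and x: "x \<in> S"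
  shows "set_pmf (kernel_pow K t x) \<subseteq> S
    \<and> (\<forall>y\<in>S. (1 - (1 - \<alpha>) ^ t) * pmf \<pi> y \<le> pmf (kernel_pow K t x) y)"
proof (induction t)
  case 0
  then show ?case
    using x by (simp add: kernel_pow_def)
next
  case (Suc t)
  let ?\<mu> = "kernel_pow K t x" and ?\<beta> = "1 - (1 - \<alpha>) ^ t"
  have sm: "set_pmf ?\<mu> \<subseteq> S" and lb: "\<forall>y\<in>S. ?\<beta> * pmf \<pi> y \<le> pmf ?\<mu> y"
    using Suc by auto
  have "(1 - (1 - \<alpha>) ^ Suc t) * pmf \<pi> y \<le> pmf (kernel_pow K (Suc t) x) y" if y: "y \<in> S" for y
  proof -
    have split: "pmf (kernel_pow K (Suc t) x) y = (\<Sum>z\<in>S. (pmf ?\<mu> z - ?\<beta> * pmf \<pi> z) * pmf (K z) y)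
        + ?\<beta> * (\<Sum>z\<in>S. pmf \<pi> z * pmf (K z) y)"
    proof -
      have "pmf (kernel_pow K (Suc t) x) y = (\<Sum>z\<in>S. pmf (K z) y * pmf ?\<mu> z)"
        unfolding kernel_pow_Suc pmf_bind using sm fin by (intro integral_measure_pmf_real) auto
      then show ?thesis
        by (simp add: algebra_simps sum.distrib sum_distrib_left sum_subtractf)
    qed
    have rest: "(\<Sum>z\<in>S. (pmf ?\<mu> z - ?\<beta> * pmf \<pi> z) * pmf (K z) y)
        \<ge> (1 - ?\<beta>) * (\<alpha> * pmf \<pi> y)"
    proof -
      have "(1 - ?\<beta>) * (\<alpha> * pmf \<pi> y)
          = (\<Sum>z\<in>S. (pmf ?\<mu> z - ?\<beta> * pmf \<pi> z) * (\<alpha> * pmf \<pi> y))"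
        using sum_pmf_eq_1[OF fin sm] sum_pmf_eq_1[OF fin sp]
        by (simp add: sum_distrib_right[symmetric] sum_subtractf sum_distrib_left[symmetric])
      also have "\<dots> \<le> (\<Sum>z\<in>S. (pmf ?\<mu> z - ?\<beta> * pmf \<pi> z) * pmf (K z) y)"
        using lb minor y by (intro sum_mono mult_left_mono) auto
      finally show ?thesis .
    qed
    have "(1 - ?\<beta>) * (\<alpha> * pmf \<pi> y) + ?\<beta> * pmf \<pi> y = (1 - (1 - \<alpha>) ^ Suc t) * pmf \<pi> y"
      by (simp add: algebra_simps)
    then show ?thesis
      using split rest stat y by simp
  qed
  moreover have "set_pmf (kernel_pow K (Suc t) x) \<subseteq> S"
    using sm sk by (auto simp: kernel_pow_Suc)
  ultimately show ?case
    by auto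
qed

lemma tv_dist_kernel_pow_le:
  fixes K :: "'a \<Rightarrow> 'a pmf"
  assumes fin: "finite S" and sp: "set_pmf \<pi> \<subseteq> S" and sk: "\<forall>x\<in>S. set_pmf (K x) \<subseteq> S"
    and stat: "\<forall>y\<in>S. (\<Sum>z\<in>S. pmf \<pi> z * pmf (K z) y) = pmf \<pi> y"
    and minor: "\<forall>x\<in>S. \<forall>y\<in>S. \<alpha> * pmf \<pi> y \<le> pmf (K x) y"
    and "0 \<le> \<alpha>" "\<alpha> \<le> 1" and x: "x \<in> S"
  shows "tv_dist (kernel_pow K t x) \<pi> \<le> (1 - \<alpha>) ^ t"
proof -
  have "0 \<le> (1 - \<alpha>) ^ t" "(1 - \<alpha>) ^ t \<le> 1"
    using \<open>0 \<le> \<alpha>\<close> \<open>\<alpha> \<le> 1\<close> by (simp_all add: power_le_one)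
  then show ?thesis
    using tv_dist_le_if_pmf_ge[OF fin _ sp, of "kernel_pow K t x" "1 - (1 - \<alpha>) ^ t"]
      kernel_pow_ge_stationary[OF assms(1-5) x, of t]
    by simp
qed

section \<open>Metropolis-Hastings kernels\<close>

definition mh_kernel :: "('a \<Rightarrow> 'a pmf) \<Rightarrow> ('a \<Rightarrow> real) \<Rightarrow> 'a \<Rightarrow> 'a pmf" where
  "mh_kernel Q w x = bind_pmf (Q x) (\<lambda>y. map_pmf (\<lambda>acc. if acc then y else x)
     (bernoulli_pmf (min ((pmf (Q y) x * w y) / (pmf (Q x) y * w x)) 1)))"

definition weights_pmf :: "'a set \<Rightarrow> ('a \<Rightarrow> real) \<Rightarrow> 'a pmf" where
  "weights_pmf S w = embed_pmf (\<lambda>x. w x / (\<Sum>y\<in>S. w y))"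

lemma pmf_weights_pmf:
  assumes "finite S" "x0 \<in> S" "\<And>x. x \<in> S \<Longrightarrow> w x > 0" "\<And>x. x \<notin> S \<Longrightarrow> w x = 0"
  shows "pmf (weights_pmf S w) x = w x / (\<Sum>y\<in>S. w y)"
proof -
  let ?Z = "\<Sum>y\<in>S. w y"
  have "?Z > 0"
    using assms(1-3) by (intro sum_pos) auto
  moreover have w_nonneg: "w x \<ge> 0" for x
    using assms(3,4) by (cases "x \<in> S") (auto intro: less_imp_le)
  ultimately have nonneg: "0 \<le> w x / ?Z" for x
    by simp
  have "(\<integral>\<^sup>+x. ennreal (w x / ?Z) \<partial>count_space UNIV) = (\<Sum>x\<in>S. ennreal (w x / ?Z))"
    using assms(1,4) by (intro nn_integral_count_space') auto
  also have "\<dots> = ennreal (\<Sum>x\<in>S. w x / ?Z)"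
    using nonneg by (simp add: sum_ennreal)
  also have "(\<Sum>x\<in>S. w x / ?Z) = 1"
    using \<open>?Z > 0\<close> by (simp add: sum_divide_distrib[symmetric])
  finally show ?thesis
    unfolding weights_pmf_def using pmf_embed_pmf[OF nonneg] by simp
qed

lemma set_pmf_weights_pmf:
  assumes "finite S" "x0 \<in> S" "\<And>x. x \<in> S \<Longrightarrow> w x > 0" "\<And>x. x \<notin> S \<Longrightarrow> w x = 0"
  shows "set_pmf (weights_pmf S w) \<subseteq> S"
proof
  fix x
  assume "x \<in> set_pmf (weights_pmf S w)"
  then have "w x \<noteq> 0"
    using pmf_weights_pmf[of S x0 w x, OF assms] by (simp add: set_pmf_iff)
  then show "x \<in> S"
    using assms(4) by blast
qed

lemma pmf_map_bernoulli_pmf: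
  assumes "0 \<le> a" "a \<le> 1"
  shows "pmf (map_pmf (\<lambda>b. if b then z else x) (bernoulli_pmf a)) y
       = (if z = y then a else 0) + (if x = y then 1 - a else 0)"
proof -
  have "pmf (map_pmf (\<lambda>b. if b then z else x) (bernoulli_pmf a)) y
      = (\<Sum>b\<in>(\<lambda>b. if b then z else x) -` {y}. pmf (bernoulli_pmf a) b)"
    by (simp add: pmf_map measure_measure_pmf_finite)
  also have "\<dots> = (\<Sum>b\<in>UNIV. if (if b then z else x) = y then pmf (bernoulli_pmf a) b else 0)"
    by (rule sum.mono_neutral_cong_left) auto
  also have "\<dots> = (if z = y then a else 0) + (if x = y then 1 - a else 0)"
    using assms by (simp add: UNIV_bool)
  finally show ?thesis .
qed

lemma mult_min_divide_1:
  fixes a b :: real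
  assumes "0 \<le> a" "0 \<le> b"
  shows "a * min (b / a) 1 = min a b"
  using assms by (cases "a = 0") (simp_all add: min_mult_distrib_left min.commute)

lemma pmf_mh_kernel_neq:
  assumes "\<And>z. 0 \<le> w z" "y \<noteq> x"
  shows "pmf (mh_kernel Q w x) y = pmf (Q x) y * min ((pmf (Q y) x * w y) / (pmf (Q x) y * w x)) 1"
proof -
  let ?acc = "\<lambda>z. min ((pmf (Q z) x * w z) / (pmf (Q x) z * w x)) 1"
  have "pmf (mh_kernel Q w x) y
      = (\<integral>z. pmf (map_pmf (\<lambda>acc. if acc then z else x) (bernoulli_pmf (?acc z))) y
           \<partial>measure_pmf (Q x))"
    unfolding mh_kernel_def pmf_bind ..
  also have "\<dots> = (\<integral>z. (if z = y then ?acc y else 0) \<partial>measure_pmf (Q x))"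
    using assms by (intro Bochner_Integration.integral_cong) (auto simp: pmf_map_bernoulli_pmf)
  also have "\<dots> = pmf (Q x) y * ?acc y"
    by (subst integral_measure_pmf_real[of "{y}"]) (auto split: if_splits)
  finally show ?thesis .
qed

text \<open>The right-hand side is symmetric in x and y: detailed balance with respect to w.\<close>
lemma mh_kernel_flow:
  assumes "\<And>z. 0 \<le> w z" "y \<noteq> x"
  shows "w x * pmf (mh_kernel Q w x) y = min (pmf (Q x) y * w x) (pmf (Q y) x * w y)"
  using mult_min_divide_1[of "pmf (Q x) y * w x" "pmf (Q y) x * w y"] assms
  by (simp add: pmf_mh_kernel_neq ac_simps)

lemma pmf_lazify: "pmf (lazify K x) y = 1/2 * pmf (K x) y + 1/2 * (if x = y then 1 else 0)"
  unfolding lazify_def pmf_bind by simp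

lemma set_pmf_lazify: "set_pmf (lazify K x) = insert x (set_pmf (K x))"
  by (simp add: lazify_def set_pmf_bernoulli UNIV_bool)

lemma lazy_mh_kernel_detailed_balance:
  assumes "\<And>z. 0 \<le> w z"
  shows "w x * pmf (lazify (mh_kernel Q w) x) y = w y * pmf (lazify (mh_kernel Q w) y) x"
proof (cases "x = y")
  case False
  then show ?thesis
    using mh_kernel_flow[of w y x Q, OF assms] mh_kernel_flow[of w x y Q, OF assms]
    by (simp add: pmf_lazify algebra_simps min.commute)
qed simp

lemma stationary_if_detailed_balance:
  assumes "finite S" "set_pmf (K y) \<subseteq> S" "\<forall>x\<in>S. \<pi> x * pmf (K x) y = \<pi> y * pmf (K y) x"
  shows "(\<Sum>x\<in>S. \<pi> x * pmf (K x) y) = \<pi> y"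
proof -
  have "(\<Sum>x\<in>S. \<pi> x * pmf (K x) y) = \<pi> y * (\<Sum>x\<in>S. pmf (K y) x)"
    using assms(3) by (simp add: sum_distrib_left)
  also have "\<dots> = \<pi> y"
    using sum_pmf_eq_1[OF assms(1,2)] by simp
  finally show ?thesis .
qed

lemma set_pmf_mh_kernel:
  assumes "\<And>z. 0 \<le> w z"
  shows "set_pmf (mh_kernel Q w x) \<subseteq> insert x {y. w y \<noteq> 0}"
proof
  fix y
  assume "y \<in> set_pmf (mh_kernel Q w x)"
  then show "y \<in> insert x {y. w y \<noteq> 0}"
    using pmf_mh_kernel_neq[of w y x Q, OF assms] by (auto simp: set_pmf_iff)
qed

text \<open>Minorization: the flow from x to y is at least q min(w x, w y), and
  min(w x, w y) is at least w x w y / Z because both weights are at most the total weight Z.\<close>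
lemma lazy_mh_kernel_ge_weights_pmf:
  assumes fin: "finite S"
    and pos: "\<And>x. x \<in> S \<Longrightarrow> w x > 0" and zero: "\<And>x. x \<notin> S \<Longrightarrow> w x = 0"
    and q: "0 \<le> q" and Q_ge: "\<forall>x\<in>S. \<forall>y\<in>S. q \<le> pmf (Q x) y"
    and x: "x \<in> S" and y: "y \<in> S"
  shows "q / 2 * pmf (weights_pmf S w) y \<le> pmf (lazify (mh_kernel Q w) x) y"
proof -
  let ?Z = "\<Sum>z\<in>S. w z"
  have w_nonneg: "0 \<le> w z" for z
    using pos zero by (cases "z \<in> S") (auto intro: less_imp_le)
  have w_le_Z: "w z \<le> ?Z" if "z \<in> S" for z
    using fin that w_nonneg by (intro member_le_sum) auto
  have Z_pos: "?Z > 0"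
    using fin x pos by (intro sum_pos) auto
  have pmf_\<pi>: "pmf (weights_pmf S w) y = w y / ?Z"
    using pmf_weights_pmf[of S x w, OF fin x pos zero] .
  show ?thesis
  proof (cases "x = y")
    case True
    have "q \<le> 1"
      using Q_ge x pmf_le_1[of "Q x" x] by (meson order.trans)
    moreover have "w y / ?Z \<le> 1"
      using w_le_Z[OF y] Z_pos by simp
    ultimately have "q * (w y / ?Z) \<le> 1"
      using q w_nonneg Z_pos by (intro mult_le_one) auto
    then have "q / 2 * pmf (weights_pmf S w) y \<le> 1 / 2"
      using pmf_\<pi> by simp
    also have "1 / 2 \<le> pmf (lazify (mh_kernel Q w) x) y"
      using True by (simp add: pmf_lazify)
    finally show ?thesis .
  next
    case False
    have "w x * (q * (w y / ?Z)) = q * (w x * w y / ?Z)"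
      by simp
    also have "\<dots> \<le> q * min (w x) (w y)"
    proof -
      have "w x * w y \<le> w x * ?Z" "w x * w y \<le> ?Z * w y"
        using w_le_Z[OF x] w_le_Z[OF y] w_nonneg by (simp_all add: mult_left_mono mult_right_mono)
      then have "w x * w y / ?Z \<le> min (w x) (w y)"
        using Z_pos by (simp add: pos_divide_le_eq mult.commute)
      then show ?thesis
        using q by (rule mult_left_mono)
    qed
    also have "\<dots> = min (q * w x) (q * w y)"
      using q by (simp add: min_mult_distrib_left)
    also have "\<dots> \<le> min (pmf (Q x) y * w x) (pmf (Q y) x * w y)"
      using Q_ge x y w_nonneg by (intro min.mono mult_right_mono) auto
    also have "\<dots> = w x * pmf (mh_kernel Q w x) y"
      using mh_kernel_flow[of w y x Q, OF w_nonneg] False by simp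
    finally have "q * (w y / ?Z) \<le> pmf (mh_kernel Q w x) y"
      using pos[OF x] by (rule mult_left_le_imp_le)
    then show ?thesis
      using False pmf_\<pi> by (simp add: pmf_lazify)
  qed
qed

lemma tv_dist_lazy_mh_kernel_pow_le:
  assumes fin: "finite S"
    and pos: "\<And>x. x \<in> S \<Longrightarrow> w x > 0" and zero: "\<And>x. x \<notin> S \<Longrightarrow> w x = 0"
    and "0 \<le> q" and Q_ge: "\<forall>x\<in>S. \<forall>y\<in>S. q \<le> pmf (Q x) y" and x: "x \<in> S"
  shows "tv_dist (kernel_pow (lazify (mh_kernel Q w)) t x) (weights_pmf S w) \<le> (1 - q / 2) ^ t"
proof -
  let ?K = "lazify (mh_kernel Q w)" and ?\<pi> = "weights_pmf S w"
  have w_nonneg: "0 \<le> w z" for z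
    using pos zero by (cases "z \<in> S") (auto intro: less_imp_le)
  have K_S: "\<forall>z\<in>S. set_pmf (?K z) \<subseteq> S"
    using set_pmf_mh_kernel[of w Q, OF w_nonneg] zero by (fastforce simp: set_pmf_lazify)
  have "(\<Sum>z\<in>S. pmf ?\<pi> z * pmf (?K z) y) = pmf ?\<pi> y" if "y \<in> S" for y
    using pmf_weights_pmf[of S x w, OF fin x pos zero] lazy_mh_kernel_detailed_balance[where w = w and Q = Q, OF w_nonneg]
    by (intro stationary_if_detailed_balance[OF fin]) (use K_S that in auto)
  moreover have "q \<le> 1"
    using Q_ge x pmf_le_1[of "Q x" x] by (meson order.trans)
  ultimately show ?thesis
    using tv_dist_kernel_pow_le[OF fin set_pmf_weights_pmf[of S x w, OF fin x pos zero] K_S]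
      lazy_mh_kernel_ge_weights_pmf[OF fin pos zero \<open>0 \<le> q\<close> Q_ge] x \<open>0 \<le> q\<close>
    by simp
qed

lemma mix_time_lazy_mh_kernel_le:
  assumes "finite S" "\<And>x. x \<in> S \<Longrightarrow> w x > 0" "\<And>x. x \<notin> S \<Longrightarrow> w x = 0"
    and "0 \<le> q" "\<forall>x\<in>S. \<forall>y\<in>S. q \<le> pmf (Q x) y" and "(1 - q / 2) ^ t \<le> eps"
  shows "mix_time (lazify (mh_kernel Q w)) S (weights_pmf S w) eps \<le> enat t"
  unfolding mix_time_def
  using tv_dist_lazy_mh_kernel_pow_le[where S = S and w = w and Q = Q, OF assms(1-5)] assms(6)
  by (intro INF_lower2[of t]) (auto intro: order.trans)

section \<open>Tree paths and the reversibility of the tree moves\<close>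

lemma subtree_Leaf [simp]: "subtree Leaf q = Leaf"
  by (cases q) auto

lemma subtree_append: "subtree T (p @ q) = subtree (subtree T p) q"
  by (induction T p rule: subtree.induct) auto

lemma replace_append: "replace T (p @ q) S = replace T p (replace (subtree T p) q S)"
  by (induction T p rule: subtree.induct) auto

lemma replace_replace [simp]: "replace (replace T p X) p Y = replace T p Y"
  by (induction T p rule: subtree.induct) auto

lemma replace_subtree [simp]: "replace T p (subtree T p) = T"
  by (induction T p rule: subtree.induct) auto

lemma subtree_replace: "p \<in> paths T \<Longrightarrow> subtree (replace T p X) p = X"
  by (induction T p rule: subtree.induct) auto

lemma Nil_in_paths [simp]: "[] \<in> paths T"
  by (cases T) auto

lemma append_in_paths_replace:
  "p \<in> paths T \<Longrightarrow> q \<in> paths X \<Longrightarrow> p @ q \<in> paths (replace T p X)"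
  by (induction T p rule: subtree.induct) auto

lemma in_paths_replace: "p \<in> paths T \<Longrightarrow> p \<in> paths (replace T p X)"
  using append_in_paths_replace[of p T "[]" X] by simp

lemma finite_paths: "finite (paths T)"
  by (induction T) auto

lemma valid_in_subtree:
  "valid_in d C T \<Longrightarrow> p \<in> paths T \<Longrightarrow> \<exists>C'\<subseteq>C. valid_in d C' (subtree T p)"
proof (induction T arbitrary: C p)
  case Leaf
  then show ?case by auto
next
  case (Node \<rho> l r)
  show ?case
  proof (cases p)
    case Nil
    then show ?thesis using Node.prems by auto
  next
    case (Cons b q)
    show ?thesis
    proof (cases b)
      case True
      then obtain C' where "C' \<subseteq> C \<inter> gt_set \<rho>" "valid_in d C' (subtree r q)"
        using Node.IH(2)[of "C \<inter> gt_set \<rho>" q] Node.prems Cons by auto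
      then show ?thesis
        using Cons True by auto
    next
      case False
      then obtain C' where "C' \<subseteq> C \<inter> le_set \<rho>" "valid_in d C' (subtree l q)"
        using Node.IH(1)[of "C \<inter> le_set \<rho>" q] Node.prems Cons by auto
      then show ?thesis
        using Cons False by auto
    qed
  qed
qed

lemma valid_in_Node_rule_in_rules:
  assumes "valid_in d C (Node \<rho> l r)" "C \<subseteq> Xset B d"
  shows "\<rho> \<in> rules B d"
proof -
  obtain x where x: "x \<in> C" "x ! fst \<rho> > snd \<rho>"
    using assms(1) by (auto simp: gt_set_def)
  moreover have "fst \<rho> < d"
    using assms(1) by auto
  ultimately have "x ! fst \<rho> \<le> B"
    using assms(2) by (auto simp: Xset_def)
  then show ?thesis
    using x \<open>fst \<rho> < d\<close> by (auto simp: rules_def mem_Times_iff)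
qed

lemma valid_tree_rule_in_rules:
  assumes "valid_tree B d T" "p \<in> paths T" "subtree T p = Node \<rho> l r"
  shows "\<rho> \<in> rules B d"
proof -
  obtain C where "C \<subseteq> Xset B d" "valid_in d C (Node \<rho> l r)"
    using valid_in_subtree[OF assms(1)[unfolded valid_tree_def] assms(2)] assms(3) by auto
  then show ?thesis
    using valid_in_Node_rule_in_rules by blast
qed

lemma valid_in_Node_child_rule_neq:
  assumes "valid_in d C (Node \<rho> l r)"
  shows "l = Node \<sigma> a b \<Longrightarrow> \<sigma> \<noteq> \<rho>" and "r = Node \<sigma> a b \<Longrightarrow> \<sigma> \<noteq> \<rho>"
  using assms by (auto simp: le_set_def gt_set_def)

lemma finite_rules: "finite (rules B d)"
  by (simp add: rules_def)

lemma finite_growable: "finite (growable B d T)"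
  using finite_paths[of T] by (rule rev_finite_subset) (auto simp: growable_def leaf_paths_def)

lemma finite_grow_rules: "finite (grow_rules B d T p)"
  using finite_rules by (rule rev_finite_subset) (auto simp: grow_rules_def)

lemma finite_prunable: "finite (prunable T)"
  using finite_paths[of T] by (rule rev_finite_subset) (auto simp: prunable_def int_paths_def)

lemma finite_changeable: "finite (changeable B d T)"
  using finite_paths[of T] by (rule rev_finite_subset) (auto simp: changeable_def int_paths_def)

lemma finite_change_rules: "finite (change_rules B d T p)"
  using finite_rules by (rule rev_finite_subset) (auto simp: change_rules_def)

lemma finite_swap_pairs: "finite (swap_pairs B d T)"
  using finite_subset[of "swap_pairs B d T" "paths T \<times> UNIV"] finite_paths[of T]
  by (auto simp: swap_pairs_def int_paths_def)

lemma set_pmf_grow_prop: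
  "set_pmf (grow_prop B d T) = (if growable B d T = {} then {T}
     else \<Union>p\<in>growable B d T. (\<lambda>\<rho>. replace T p (Node \<rho> Leaf Leaf)) ` grow_rules B d T p)"
proof (cases "growable B d T = {}")
  case False
  have "set_pmf (grow_prop B d T) = (\<Union>p\<in>growable B d T.
      set_pmf (map_pmf (\<lambda>\<rho>. replace T p (Node \<rho> Leaf Leaf)) (pmf_of_set (grow_rules B d T p))))"
    using False by (simp add: grow_prop_def finite_growable)
  also have "\<dots> = (\<Union>p\<in>growable B d T. (\<lambda>\<rho>. replace T p (Node \<rho> Leaf Leaf)) ` grow_rules B d T p)"
    by (intro SUP_cong refl) (simp add: finite_grow_rules growable_def)
  finally show ?thesis
    using False by simp
qed (simp add: grow_prop_def)

lemma set_pmf_prune_prop: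
  "set_pmf (prune_prop T) = (if prunable T = {} then {T} else (\<lambda>p. replace T p Leaf) ` prunable T)"
  by (simp add: prune_prop_def finite_prunable)

lemma set_pmf_change_prop:
  "set_pmf (change_prop B d T) = (if changeable B d T = {} then {T}
     else \<Union>p\<in>changeable B d T. set_rule_at T p ` change_rules B d T p)"
proof (cases "changeable B d T = {}")
  case False
  have "set_pmf (change_prop B d T) = (\<Union>p\<in>changeable B d T.
      set_pmf (map_pmf (set_rule_at T p) (pmf_of_set (change_rules B d T p))))"
    using False by (simp add: change_prop_def finite_changeable)
  also have "\<dots> = (\<Union>p\<in>changeable B d T. set_rule_at T p ` change_rules B d T p)"
    by (intro SUP_cong refl) (simp add: finite_change_rules changeable_def)
  finally show ?thesis
    using False by simp
qed (simp add: change_prop_def)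

lemma set_pmf_swap_prop:
  "set_pmf (swap_prop B d T) = (if swap_pairs B d T = {} then {T}
     else (\<lambda>(p, b). swap_result T p b) ` swap_pairs B d T)"
  by (simp add: swap_prop_def finite_swap_pairs)

lemma grow_prop_reverse:
  assumes "T' \<in> set_pmf (grow_prop B d T)" "T' \<noteq> T"
  shows "T \<in> set_pmf (prune_prop T')"
proof -
  obtain p \<rho> where p: "p \<in> growable B d T" and T': "T' = replace T p (Node \<rho> Leaf Leaf)"
    using assms by (auto simp: set_pmf_grow_prop split: if_splits)
  have p_path: "p \<in> paths T" and leaf: "subtree T p = Leaf"
    using p by (auto simp: growable_def leaf_paths_def)
  have "p \<in> prunable T'"
    using T' in_paths_replace[OF p_path] subtree_replace[OF p_path]
    by (auto simp: prunable_def int_paths_def subtree_append)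
  moreover have "replace T' p Leaf = T"
    using T' leaf replace_subtree[of T p] by simp
  ultimately show ?thesis
    by (auto simp: set_pmf_prune_prop)
qed

lemma prune_prop_reverse:
  assumes V: "valid_tree B d T" and T': "T' \<in> set_pmf (prune_prop T)" "T' \<noteq> T"
  shows "T \<in> set_pmf (grow_prop B d T')"
proof -
  obtain p where p: "p \<in> prunable T" and T'_eq: "T' = replace T p Leaf"
    using T' by (auto simp: set_pmf_prune_prop split: if_splits)
  have p_path: "p \<in> paths T"
    using p by (auto simp: prunable_def int_paths_def)
  obtain \<rho> where N: "subtree T p = Node \<rho> Leaf Leaf"
    using p by (cases "subtree T p") (auto simp: prunable_def int_paths_def subtree_append)
  have undo: "replace T' p (Node \<rho> Leaf Leaf) = T"
    using T'_eq N replace_subtree[of T p] by simp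
  have "\<rho> \<in> grow_rules B d T' p"
    using valid_tree_rule_in_rules[OF V p_path N] undo V by (simp add: grow_rules_def)
  moreover have "p \<in> growable B d T'"
    using calculation T'_eq in_paths_replace[OF p_path] subtree_replace[OF p_path]
    by (auto simp: growable_def leaf_paths_def)
  ultimately show ?thesis
    using undo by (auto simp: set_pmf_grow_prop)
qed

lemma change_prop_reverse:
  assumes V: "valid_tree B d T" and T': "T' \<in> set_pmf (change_prop B d T)" "T' \<noteq> T"
  shows "T \<in> set_pmf (change_prop B d T')"
proof -
  obtain p \<rho>' where p: "p \<in> changeable B d T" and \<rho>': "\<rho>' \<in> change_rules B d T p"
    and T'_eq: "T' = set_rule_at T p \<rho>'"
    using T' by (auto simp: set_pmf_change_prop split: if_splits)
  have p_path: "p \<in> paths T"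
    using p by (auto simp: changeable_def int_paths_def)
  obtain \<rho> l r where N: "subtree T p = Node \<rho> l r"
    using p by (cases "subtree T p") (auto simp: changeable_def int_paths_def)
  have T'_replace: "T' = replace T p (Node \<rho>' l r)"
    using T'_eq N by (simp add: set_rule_at_def)
  have sub': "subtree T' p = Node \<rho>' l r"
    using T'_replace subtree_replace[OF p_path] by simp
  have undo: "set_rule_at T' p \<rho> = T"
    using sub' T'_replace N replace_subtree[of T p] by (simp add: set_rule_at_def)
  have "\<rho> \<in> change_rules B d T' p"
    using valid_tree_rule_in_rules[OF V p_path N] \<rho>' N sub' undo V by (auto simp: change_rules_def)
  moreover have "p \<in> changeable B d T'"
    using calculation sub' in_paths_replace[OF p_path] T'_replace
    by (auto simp: changeable_def int_paths_def)
  ultimately show ?thesis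
    using undo by (auto simp: set_pmf_change_prop)
qed

lemma swap_result_eq_replace:
  "p \<in> paths T \<Longrightarrow> swap_result T p b = replace T p (swap_result (subtree T p) [] b)"
  by (simp add: swap_result_def set_rule_at_def Let_def subtree_append replace_append subtree_replace)

text \<open>A valid node never shares its rule with a child, so a swap at the root can be undone
  by the same swap.\<close>
lemma swap_result_Node_involutive:
  assumes V: "valid_in d C (Node \<rho> l r)" and child: "subtree (Node \<rho> l r) [b] \<noteq> Leaf"
  shows "swap_result (swap_result (Node \<rho> l r) [] b) [] b = Node \<rho> l r"
    and "subtree (swap_result (Node \<rho> l r) [] b) [b] \<noteq> Leaf"
  using child valid_in_Node_child_rule_neq[OF V]
  by (cases l; cases r; cases b; auto simp: swap_result_def set_rule_at_def Let_def)+

lemma swap_prop_reverse: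
  assumes V: "valid_tree B d T" and T': "T' \<in> set_pmf (swap_prop B d T)" "T' \<noteq> T"
  shows "T \<in> set_pmf (swap_prop B d T')"
proof -
  obtain p b where pb: "(p, b) \<in> swap_pairs B d T" and T'_eq: "T' = swap_result T p b"
    using T' by (auto simp: set_pmf_swap_prop split: if_splits)
  have p_path: "p \<in> paths T" and child: "subtree T (p @ [b]) \<noteq> Leaf"
    using pb by (auto simp: swap_pairs_def int_paths_def)
  obtain \<rho> l r where N: "subtree T p = Node \<rho> l r"
    using pb by (cases "subtree T p") (auto simp: swap_pairs_def int_paths_def)
  obtain C where C: "valid_in d C (Node \<rho> l r)"
    using valid_in_subtree[OF V[unfolded valid_tree_def] p_path] N by auto
  have child_N: "subtree (Node \<rho> l r) [b] \<noteq> Leaf"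
    using child N by (simp add: subtree_append)
  define N' where "N' = swap_result (Node \<rho> l r) [] b"
  have T'_replace: "T' = replace T p N'"
    using swap_result_eq_replace[OF p_path] N T'_eq by (simp add: N'_def)
  have sub': "subtree T' p = N'"
    using T'_replace subtree_replace[OF p_path] by simp
  have child': "subtree N' [b] \<noteq> Leaf"
    using swap_result_Node_involutive(2)[OF C child_N] by (simp add: N'_def)
  then have "[b] \<in> paths N'"
    by (cases N'; cases b) auto
  then have p_paths': "p \<in> paths T'" "p @ [b] \<in> paths T'"
    using T'_replace in_paths_replace[OF p_path] append_in_paths_replace[OF p_path] by auto
  have undo: "swap_result T' p b = T"
    using swap_result_eq_replace[OF p_paths'(1)] sub' T'_replace
      swap_result_Node_involutive(1)[OF C child_N] N replace_subtree[of T p]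
    by (simp add: N'_def)
  have "(p, b) \<in> swap_pairs B d T'"
    using p_paths' sub' child' undo V by (auto simp: swap_pairs_def int_paths_def subtree_append)
  then have "T \<in> (\<lambda>(p, b). swap_result T' p b) ` swap_pairs B d T'"
    using undo by (metis (no_types, lifting) case_prod_conv image_eqI)
  then show ?thesis
    by (auto simp: set_pmf_swap_prop)
qed

lemma pmf_move_pmf:
  assumes "p0 \<ge> 0" "pg \<ge> 0" "pp \<ge> 0" "pc \<ge> 0" "ps \<ge> 0" "p0 + pg + pp + pc + ps = 1"
  shows "pmf (move_pmf p0 pg pp pc ps) k = (if k = 0 then p0 else if k = 1 then pg
      else if k = 2 then pp else if k = 3 then pc else if k = 4 then ps else 0)"
proof -
  define f :: "nat \<Rightarrow> real" where "f k = (if k = 0 then p0 else if k = 1 then pg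
      else if k = 2 then pp else if k = 3 then pc else if k = 4 then ps else 0)" for k
  have f_nonneg: "0 \<le> f k" for k
    using assms by (simp add: f_def)
  have "(\<integral>\<^sup>+k. ennreal (f k) \<partial>count_space UNIV) = (\<Sum>k<5. ennreal (f k))"
    by (rule nn_integral_count_space') (auto simp: f_def)
  also have "\<dots> = ennreal (\<Sum>k<5. f k)"
    using f_nonneg by (simp add: sum_ennreal)
  also have "(\<Sum>k<5. f k) = 1"
    using assms(6) by (simp add: f_def numeral_eq_Suc)
  finally have "pmf (embed_pmf f) k = f k"
    using pmf_embed_pmf[OF f_nonneg] by simp
  moreover have "move_pmf p0 pg pp pc ps = embed_pmf f"
    unfolding move_pmf_def f_def[abs_def] ..
  ultimately show ?thesis
    by (simp add: f_def)
qed

definition apply_move :: "nat \<Rightarrow> nat \<Rightarrow> nat \<Rightarrow> tree \<Rightarrow> tree pmf" where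
  "apply_move B d k T = (if k = 1 then grow_prop B d T else if k = 2 then prune_prop T
     else if k = 3 then change_prop B d T else if k = 4 then swap_prop B d T else return_pmf T)"

lemma set_pmf_tree_prop:
  "set_pmf (tree_prop B d p0 pg pp pc ps T) =
     (\<Union>k\<in>set_pmf (move_pmf p0 pg pp pc ps). set_pmf (apply_move B d k T))"
  by (simp add: tree_prop_def apply_move_def)

lemma tree_prop_reverse:
  assumes probs: "p0 \<ge> 0" "pg > 0" "pp > 0" "pc \<ge> 0" "ps \<ge> 0" "p0 + pg + pp + pc + ps = 1"
    and V: "valid_tree B d T" and T': "T' \<in> set_pmf (tree_prop B d p0 pg pp pc ps T)"
  shows "T \<in> set_pmf (tree_prop B d p0 pg pp pc ps T')"
proof (cases "T' = T")
  case True
  then show ?thesis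
    using T' by simp
next
  case False
  obtain k where k: "k \<in> set_pmf (move_pmf p0 pg pp pc ps)" and T'_k: "T' \<in> set_pmf (apply_move B d k T)"
    using T' by (auto simp: set_pmf_tree_prop)
  have "\<exists>k'\<in>set_pmf (move_pmf p0 pg pp pc ps). T \<in> set_pmf (apply_move B d k' T')"
  proof -
    consider "k = 1" | "k = 2" | "k = 3" | "k = 4" | "k \<notin> {1, 2, 3, 4}"
      by blast
    then show ?thesis
    proof cases
      case 1
      then show ?thesis
        using grow_prop_reverse[of T' B d T] T'_k False probs
        by (auto simp: apply_move_def set_pmf_iff pmf_move_pmf intro!: bexI[of _ 2])
    next
      case 2
      then show ?thesis
        using prune_prop_reverse[OF V] T'_k False probs
        by (auto simp: apply_move_def set_pmf_iff pmf_move_pmf intro!: bexI[of _ 1])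
    next
      case 3
      then show ?thesis
        using change_prop_reverse[OF V] T'_k False k
        by (auto simp: apply_move_def intro!: bexI[of _ 3])
    next
      case 4
      then show ?thesis
        using swap_prop_reverse[OF V] T'_k False k
        by (auto simp: apply_move_def intro!: bexI[of _ 4])
    next
      case 5
      then show ?thesis
        using T'_k False by (auto simp: apply_move_def)
    qed
  qed
  then show ?thesis
    by (simp add: set_pmf_tree_prop)
qed

lemma self_in_set_pmf_tree_prop:
  assumes "p0 > 0" "pg \<ge> 0" "pp \<ge> 0" "pc \<ge> 0" "ps \<ge> 0" "p0 + pg + pp + pc + ps = 1"
  shows "T \<in> set_pmf (tree_prop B d p0 pg pp pc ps T)"
proof -
  have "0 \<in> set_pmf (move_pmf p0 pg pp pc ps)"
    using assms by (simp add: set_pmf_iff pmf_move_pmf)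
  then show ?thesis
    by (auto simp: set_pmf_tree_prop apply_move_def intro!: bexI[of _ 0])
qed

section \<open>The ensemble state space and the r-step proposal\<close>

fun rules_of :: "tree \<Rightarrow> (nat \<times> nat) set" where
  "rules_of Leaf = {}"
| "rules_of (Node \<rho> l r) = insert \<rho> (rules_of l \<union> rules_of r)"

lemma finite_trees_bounded: "finite R \<Longrightarrow> finite {T. rules_of T \<subseteq> R \<and> size T \<le> k}"
proof (induction k)
  case 0
  have "T = Leaf" if "size T \<le> 0" for T
    using that by (cases T) auto
  then have "{T. rules_of T \<subseteq> R \<and> size T \<le> 0} \<subseteq> {Leaf}"
    by blast
  then show ?case
    using finite_subset by blast
next
  case (Suc k)
  let ?A = "{T. rules_of T \<subseteq> R \<and> size T \<le> k}"
  have "{T. rules_of T \<subseteq> R \<and> size T \<le> Suc k}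
      \<subseteq> insert Leaf ((\<lambda>(\<rho>, l, r). Node \<rho> l r) ` (R \<times> ?A \<times> ?A))"
  proof
    fix T
    assume "T \<in> {T. rules_of T \<subseteq> R \<and> size T \<le> Suc k}"
    then show "T \<in> insert Leaf ((\<lambda>(\<rho>, l, r). Node \<rho> l r) ` (R \<times> ?A \<times> ?A))"
    proof (cases T)
      case (Node \<rho> l r)
      then show ?thesis
        using \<open>T \<in> _\<close> by (auto intro!: image_eqI[of _ _ "(\<rho>, l, r)"])
    qed simp
  qed
  moreover have "finite (insert Leaf ((\<lambda>(\<rho>, l, r). Node \<rho> l r) ` (R \<times> ?A \<times> ?A)))"
    using Suc by auto
  ultimately show ?case
    using finite_subset by blast
qed

lemma valid_in_size_less_card:
  "valid_in d C T \<Longrightarrow> finite C \<Longrightarrow> C \<noteq> {} \<Longrightarrow> size T < card C"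
proof (induction T arbitrary: C)
  case Leaf
  then show ?case
    by (simp add: card_gt_0_iff)
next
  case (Node \<rho> l r)
  have "card C = card (C \<inter> le_set \<rho>) + card (C \<inter> gt_set \<rho>)"
    using Node.prems(2)
    by (subst card_Un_disjoint[symmetric]) (auto simp: le_set_def gt_set_def intro!: arg_cong[of _ _ card])
  moreover have "size l < card (C \<inter> le_set \<rho>)" "size r < card (C \<inter> gt_set \<rho>)"
    using Node by auto
  ultimately show ?case
    by simp
qed

lemma valid_in_rules_of_subset:
  "valid_in d C T \<Longrightarrow> C \<subseteq> Xset B d \<Longrightarrow> rules_of T \<subseteq> rules B d"
proof (induction T arbitrary: C)
  case (Node \<rho> l r)
  then show ?case
    using valid_in_Node_rule_in_rules[OF Node.prems] by auto
qed simp

lemma finite_Xset: "finite (Xset B d)"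
proof -
  have "Xset B d \<subseteq> {xs. set xs \<subseteq> {1..B} \<and> length xs = d}"
    by (auto simp: Xset_def in_set_conv_nth)
  then show ?thesis
    using finite_lists_length_eq[of "{1..B}" d] finite_subset by blast
qed

lemma finite_valid_trees: "finite {T. valid_tree B d T}"
proof -
  have "size T \<le> card (Xset B d)" if "valid_tree B d T" for T
  proof (cases "Xset B d = {}")
    case True
    then show ?thesis
      using that by (cases T) (simp_all add: valid_tree_def)
  next
    case False
    then show ?thesis
      using that valid_in_size_less_card[of d "Xset B d" T] finite_Xset by (simp add: valid_tree_def)
  qed
  then have "{T. valid_tree B d T} \<subseteq> {T. rules_of T \<subseteq> rules B d \<and> size T \<le> card (Xset B d)}"
    using valid_in_rules_of_subset[of d "Xset B d" _ B] by (auto simp: valid_tree_def)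
  then show ?thesis
    using finite_trees_bounded[OF finite_rules] finite_subset by blast
qed

lemma finite_TSE_space: "finite (TSE_space B d m)"
proof -
  have "TSE_space B d m \<subseteq> {E. set E \<subseteq> {T. valid_tree B d T} \<and> length E = m}"
    by (auto simp: TSE_space_def)
  then show ?thesis
    using finite_lists_length_eq[OF finite_valid_trees] finite_subset by blast
qed

lemma set_pmf_ens_prop:
  assumes "E \<noteq> []"
  shows "set_pmf (ens_prop B d p0 pg pp pc ps E) =
     (\<Union>i<length E. (\<lambda>T. E[i := T]) ` set_pmf (tree_prop B d p0 pg pp pc ps (E ! i)))"
proof -
  have "set_pmf (pmf_of_set {..<length E}) = {..<length E}"
    using assms by (intro set_pmf_of_set) auto
  then show ?thesis
    by (simp add: ens_prop_def)
qed

lemma ens_prop_reverse: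
  assumes probs: "p0 \<ge> 0" "pg > 0" "pp > 0" "pc \<ge> 0" "ps \<ge> 0" "p0 + pg + pp + pc + ps = 1"
    and V: "\<forall>T\<in>set E. valid_tree B d T" and "E \<noteq> []"
    and E': "E' \<in> set_pmf (ens_prop B d p0 pg pp pc ps E)"
  shows "E \<in> set_pmf (ens_prop B d p0 pg pp pc ps E')"
proof -
  obtain i T' where i: "i < length E" and T': "T' \<in> set_pmf (tree_prop B d p0 pg pp pc ps (E ! i))"
    and E'_eq: "E' = E[i := T']"
    using E' set_pmf_ens_prop[OF \<open>E \<noteq> []\<close>] by auto
  have "E ! i \<in> set_pmf (tree_prop B d p0 pg pp pc ps (E' ! i))"
    using tree_prop_reverse[OF probs _ T'] V i E'_eq by simp
  moreover have "E = E'[i := E ! i]" "E' \<noteq> []" "i < length E'"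
    using i E'_eq by auto
  ultimately show ?thesis
    using set_pmf_ens_prop[of E'] by blast
qed

lemma self_in_set_pmf_ens_prop:
  assumes "p0 > 0" "pg \<ge> 0" "pp \<ge> 0" "pc \<ge> 0" "ps \<ge> 0" "p0 + pg + pp + pc + ps = 1"
    and "E \<noteq> []"
  shows "E \<in> set_pmf (ens_prop B d p0 pg pp pc ps E)"
  using self_in_set_pmf_tree_prop[OF assms(1-6), where T = "E ! 0" and B = B and d = d] set_pmf_ens_prop[OF assms(7)]
  by (metis (no_types, lifting) UN_iff assms(7) image_eqI length_greater_0_conv lessThan_iff
      list_update_id)

lemma set_pmf_kernel_pow_if_relpow:
  assumes "(x, y) \<in> R ^^ k" and "\<And>u v. (u, v) \<in> R \<Longrightarrow> v \<in> set_pmf (K u)"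
  shows "y \<in> set_pmf (kernel_pow K k x)"
  using assms(1)
proof (induction k arbitrary: y)
  case 0
  then show ?case
    by (simp add: kernel_pow_def)
next
  case (Suc k)
  then obtain z where "(x, z) \<in> R ^^ k" "(z, y) \<in> R"
    by auto
  then show ?case
    using Suc.IH assms(2) by (auto simp: kernel_pow_Suc)
qed

lemma set_pmf_kernel_pow_mono:
  assumes "y \<in> set_pmf (kernel_pow K k x)" "y \<in> set_pmf (K y)" "k \<le> r"
  shows "y \<in> set_pmf (kernel_pow K r x)"
  using assms(3)
proof (induction r rule: dec_induct)
  case base
  then show ?case
    using assms(1) .
next
  case (step r)
  then show ?case
    using assms(2) by (auto simp: kernel_pow_Suc)
qed

lemma graph_dist_le_enat_imp_relpow:
  assumes "graph_dist R x y \<le> enat r"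
  shows "\<exists>k\<le>r. (x, y) \<in> R ^^ k"
proof (rule ccontr)
  assume "\<not> ?thesis"
  then have "enat (Suc r) \<le> graph_dist R x y"
    unfolding graph_dist_def by (auto intro!: INF_greatest simp: not_le Suc_le_eq)
  then have "enat (Suc r) \<le> enat r"
    using assms by (rule order_trans)
  then show False
    by simp
qed

lemma ens_prop_pow_eq_kernel_pow:
  "ens_prop_pow B d p0 pg pp pc ps r E = kernel_pow (ens_prop B d p0 pg pp pc ps) r E"
  by (induction r) (simp_all add: kernel_pow_def)

lemma in_set_pmf_ens_prop_pow:
  assumes probs: "p0 > 0" "pg > 0" "pp > 0" "pc \<ge> 0" "ps \<ge> 0" "p0 + pg + pp + pc + ps = 1"
    and "m \<ge> 1" and r: "enat r \<ge> tse_diam B d p0 pg pp pc ps m"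
    and E: "E \<in> TSE_space B d m" and E': "E' \<in> TSE_space B d m"
  shows "E' \<in> set_pmf (ens_prop_pow B d p0 pg pp pc ps r E)"
proof -
  let ?R = "prop_edges B d p0 pg pp pc ps m" and ?K = "ens_prop B d p0 pg pp pc ps"
  have nonempty: "F \<noteq> []" if "F \<in> TSE_space B d m" for F
    using that \<open>m \<ge> 1\<close> by (auto simp: TSE_space_def)
  have "(E, E') \<in> TSE_space B d m \<times> TSE_space B d m"
    using E E' by simp
  then have "graph_dist ?R E E' \<le> tse_diam B d p0 pg pp pc ps m"
    unfolding tse_diam_def by (rule SUP_upper2) simp
  then have "graph_dist ?R E E' \<le> enat r"
    using r by (rule order.trans)
  then obtain k where "k \<le> r" and path: "(E, E') \<in> ?R ^^ k"
    by (auto dest: graph_dist_le_enat_imp_relpow)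
  have "F' \<in> set_pmf (?K F)" if "(F, F') \<in> ?R" for F F'
  proof -
    have "F' \<in> set_pmf (?K F) \<or> F \<in> set_pmf (?K F')" and F': "F' \<in> TSE_space B d m"
      using that by (auto simp: prop_edges_def pmf_positive_iff)
    then show ?thesis
      using ens_prop_reverse[OF less_imp_le[OF probs(1)] probs(2-6), of F' B d F] nonempty[OF F']
      by (auto simp: TSE_space_def)
  qed
  then have "E' \<in> set_pmf (kernel_pow ?K k E)"
    using set_pmf_kernel_pow_if_relpow[OF path] by blast
  moreover have "E' \<in> set_pmf (?K E')"
    using self_in_set_pmf_ens_prop[OF probs(1) less_imp_le[OF probs(2)] less_imp_le[OF probs(3)]
        probs(4-6) nonempty[OF E']] .
  ultimately show ?thesis
    using set_pmf_kernel_pow_mono \<open>k \<le> r\<close> by (simp add: ens_prop_pow_eq_kernel_pow)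
qed

lemma ex_uniform_pos_lower_bound:
  fixes f :: "'a \<Rightarrow> 'a \<Rightarrow> real"
  assumes "finite S" and "\<And>x y. x \<in> S \<Longrightarrow> y \<in> S \<Longrightarrow> 0 < f x y"
  shows "\<exists>q>0. \<forall>x\<in>S. \<forall>y\<in>S. q \<le> f x y"
proof (cases "S = {}")
  case False
  let ?q = "Min ((\<lambda>(x, y). f x y) ` (S \<times> S))"
  have "?q \<in> (\<lambda>(x, y). f x y) ` (S \<times> S)"
    using assms(1) False by (intro Min_in) auto
  then have "?q > 0"
    using assms(2) by auto
  moreover have "?q \<le> f x y" if "x \<in> S" "y \<in> S" for x y
    using assms(1) that by (intro Min_le) (auto intro!: image_eqI[of _ _ "(x, y)"])
  ultimately show ?thesis
    by blast
qed (auto intro: exI[of _ 1])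

lemma ens_prop_pow_bounded_below:
  assumes "p0 > 0" "pg > 0" "pp > 0" "pc \<ge> 0" "ps \<ge> 0" "p0 + pg + pp + pc + ps = 1"
    and "m \<ge> 1" and "enat r \<ge> tse_diam B d p0 pg pp pc ps m"
  shows "\<exists>q>0. \<forall>E\<in>TSE_space B d m. \<forall>E'\<in>TSE_space B d m.
    q \<le> pmf (ens_prop_pow B d p0 pg pp pc ps r E) E'"
proof -
  have "0 < pmf (ens_prop_pow B d p0 pg pp pc ps r E) E'"
    if "E \<in> TSE_space B d m" "E' \<in> TSE_space B d m" for E E'
    using in_set_pmf_ens_prop_pow[OF assms that] by (rule pmf_positive)
  with finite_TSE_space show ?thesis
    by (rule ex_uniform_pos_lower_bound)
qed

section \<open>The BART+ chain as a Metropolis-Hastings chain\<close>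

lemma smult_mat_mult_mat_vec:
  fixes A :: "'a::comm_ring mat"
  assumes "A \<in> carrier_mat nr nc" "v \<in> carrier_vec nc"
  shows "(k \<cdot>\<^sub>m A) *\<^sub>v v = k \<cdot>\<^sub>v (A *\<^sub>v v)"
  using assms by (intro eq_vecI) (auto simp: scalar_prod_def sum_distrib_left ac_simps)

text \<open>For v \<noteq> 0 the quadratic form v^T (I + c Psi Psi^T) v = |v|^2 + c |Psi^T v|^2 is positive.\<close>
lemma det_smult_one_plus_gram_neq_0:
  fixes Psi :: "real mat" and s2 c :: real
  assumes Psi: "Psi \<in> carrier_mat n k" and "s2 > 0" and "c > 0"
  shows "Determinant.det (s2 \<cdot>\<^sub>m (1\<^sub>m n + c \<cdot>\<^sub>m (Psi * transpose_mat Psi))) \<noteq> 0"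
proof
  let ?M = "1\<^sub>m n + c \<cdot>\<^sub>m (Psi * transpose_mat Psi)"
  have M: "?M \<in> carrier_mat n n"
    using Psi by auto
  assume "Determinant.det (s2 \<cdot>\<^sub>m ?M) = 0"
  then have "Determinant.det ?M = 0"
    using \<open>s2 > 0\<close> by simp
  then obtain v where v: "v \<in> carrier_vec n" "v \<noteq> 0\<^sub>v n" "?M *\<^sub>v v = 0\<^sub>v n"
    using det_0_iff_vec_prod_zero[OF M] by blast
  let ?u = "transpose_mat Psi *\<^sub>v v"
  have u: "?u \<in> carrier_vec k"
    using Psi v by auto
  have "?M *\<^sub>v v = v + c \<cdot>\<^sub>v (Psi *\<^sub>v ?u)"
  proof -
    have "?M *\<^sub>v v = 1\<^sub>m n *\<^sub>v v + (c \<cdot>\<^sub>m (Psi * transpose_mat Psi)) *\<^sub>v v"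
      using Psi v(1) by (intro add_mult_distrib_mat_vec[of _ n n]) auto
    also have "(c \<cdot>\<^sub>m (Psi * transpose_mat Psi)) *\<^sub>v v = c \<cdot>\<^sub>v ((Psi * transpose_mat Psi) *\<^sub>v v)"
      using Psi v(1) by (intro smult_mat_mult_mat_vec[of _ n n]) auto
    finally show ?thesis
      using Psi v(1) by simp
  qed
  then have "v \<bullet> (?M *\<^sub>v v) = v \<bullet> v + c * (v \<bullet> (Psi *\<^sub>v ?u))"
    using Psi v(1) by (simp add: scalar_prod_add_distrib[of _ n])
  also have "v \<bullet> (Psi *\<^sub>v ?u) = ?u \<bullet> ?u"
    using transpose_vec_mult_scalar[OF Psi u v(1)] by simp
  finally have quad: "v \<bullet> (?M *\<^sub>v v) = v \<bullet> v + c * (?u \<bullet> ?u)" .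
  have "v \<bullet> v > 0"
    using conjugate_square_eq_0_vec[OF v(1)] conjugate_square_ge_0_vec[of v] v(2)
    by (auto simp: order_le_less)
  moreover have "?u \<bullet> ?u \<ge> 0"
    using conjugate_square_ge_0_vec[of ?u] by simp
  moreover have "v \<bullet> (?M *\<^sub>v v) = 0"
    using v by simp
  ultimately show False
    using quad \<open>c > 0\<close> by (smt (verit) mult_nonneg_nonneg)
qed

text \<open>Only invertibility of the covariance matters: powr is positive at every nonzero base.\<close>
lemma data_lik_pos:
  assumes "s2 > 0" "lam > 0"
  shows "data_lik B d s2 lam n D E > 0"
proof -
  let ?Psi = "design_mat n (\<lambda>i. fst (D i)) (ens_cells B d E)"
  have "?Psi \<in> carrier_mat n (length (ens_cells B d E))"
    by (simp add: design_mat_def)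
  then have "Determinant.det (s2 \<cdot>\<^sub>m (1\<^sub>m n + (1 / lam) \<cdot>\<^sub>m (?Psi * transpose_mat ?Psi))) \<noteq> 0"
    using det_smult_one_plus_gram_neq_0 assms by simp
  then show ?thesis
    unfolding data_lik_def marg_lik_def Let_def by simp
qed

lemma bart_kernel_eq_mh_kernel:
  assumes "s2 > 0" "lam > 0"
  shows "bart_kernel B d p0 pg pp pc ps r 1 prior s2 lam n D =
    mh_kernel (ens_prop_pow B d p0 pg pp pc ps r) (\<lambda>E. pmf prior E * data_lik B d s2 lam n D E)"
proof
  fix E
  let ?Q = "ens_prop_pow B d p0 pg pp pc ps r" and ?L = "data_lik B d s2 lam n D"
  have acceptance: "(pmf (?Q E') E * pmf prior E') / (pmf (?Q E) E' * pmf prior E) * (?L E' / ?L E) powr (1 / 1)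
      = (pmf (?Q E') E * (pmf prior E' * ?L E')) / (pmf (?Q E) E' * (pmf prior E * ?L E))" for E'
    using data_lik_pos[OF assms] by (simp add: abs_of_pos times_divide_times_eq mult.assoc)
  show "bart_kernel B d p0 pg pp pc ps r 1 prior s2 lam n D E
      = mh_kernel ?Q (\<lambda>E. pmf prior E * ?L E) E"
    unfolding bart_kernel_def mh_kernel_def Let_def acceptance ..
qed

lemma tempered_post_eq_weights_pmf:
  assumes "s2 > 0" "lam > 0"
  shows "tempered_post B d 1 prior s2 lam n D =
    weights_pmf (set_pmf prior) (\<lambda>E. pmf prior E * data_lik B d s2 lam n D E)"
  using data_lik_pos[OF assms] by (simp add: abs_of_pos tempered_post_def weights_pmf_def)

definition bounded_in_probability :: "(nat \<Rightarrow> 'a measure) \<Rightarrow> (nat \<Rightarrow> 'a \<Rightarrow> enat) \<Rightarrow> bool" where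
  "bounded_in_probability M X \<longleftrightarrow> (\<forall>\<delta>::real. 0 < \<delta> \<and> \<delta> < 1 \<longrightarrow>
     (\<exists>(N::nat) (C::real). C > 0 \<and>
       (\<forall>n>N. {x \<in> space (M n). ennreal_of_enat (X n x) > ennreal C} \<in> sets (M n)
          \<and> measure (M n) {x \<in> space (M n). ennreal_of_enat (X n x) > ennreal C} < \<delta>)))"

lemma bounded_in_probability_if_bounded:
  assumes "\<And>n x. X n x \<le> enat t"
  shows "bounded_in_probability M X"
proof -
  define C where "C = real t + 1"
  have "ennreal_of_enat (X n x) \<le> ennreal C" for n x
  proof -
    have "ennreal_of_enat (X n x) \<le> ennreal_of_enat (enat t)"
      using assms by (simp only: ennreal_of_enat_le_iff)
    also have "\<dots> \<le> ennreal C"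
      by (simp add: C_def ennreal_of_nat_eq_real_of_nat)
    finally show ?thesis .
  qed
  then have no_exceedance: "{x \<in> space (M n). ennreal_of_enat (X n x) > ennreal C} = {}" for n
    by (auto simp: not_less[symmetric])
  have "C > 0"
    by (simp add: C_def)
  then show ?thesis
    unfolding bounded_in_probability_def
    by (intro allI impI exI[of _ "0::nat"] exI[of _ C]) (simp add: no_exceedance)
qed

theorem theorem7p2:
  fixes B d m r :: nat and \<nu> :: "nat list pmf" and noise :: "real measure"
    and fstar :: "nat list \<Rightarrow> real" and p0 pg pp pc ps s2 lam eps :: real
    and prior :: "tree list pmf"
  assumes "set_pmf \<nu> = Xset B d"
    and "centered_subgaussian noise"
    and "additive B d fstar"
    and "pg > 0" and "pp > 0" and "p0 > 0" and "pc \<ge> 0" and "ps \<ge> 0"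
    and "p0 + pg + pp + pc + ps = 1"
    and "m \<ge> 1"
    and "set_pmf prior = TSE_space B d m"
    and "s2 > 0" and "lam > 0"
    and "enat r \<ge> tse_diam B d p0 pg pp pc ps m"
    and "eps > 0"
  shows "\<forall>\<delta>::real. 0 < \<delta> \<and> \<delta> < 1 \<longrightarrow>
          (\<exists>(N::nat) (C::real). C > 0 \<and>
            (\<forall>n>N. {D \<in> space (data_measure n \<nu> noise fstar).
                     ennreal_of_enat (bart_mix_time B d p0 pg pp pc ps m r 1 prior s2 lam eps n D)
                       > ennreal C} \<in> sets (data_measure n \<nu> noise fstar)
                 \<and> measure (data_measure n \<nu> noise fstar)
                     {D \<in> space (data_measure n \<nu> noise fstar).
                       ennreal_of_enat (bart_mix_time B d p0 pg pp pc ps m r 1 prior s2 lam eps n D)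
                         > ennreal C} < \<delta>))"
proof -
  let ?S = "TSE_space B d m" and ?Q = "ens_prop_pow B d p0 pg pp pc ps r"
  obtain q where "q > 0" and Q_ge: "\<forall>E\<in>?S. \<forall>E'\<in>?S. q \<le> pmf (?Q E) E'"
    using ens_prop_pow_bounded_below[OF assms(6,4,5,7,8,9,10,14)] by blast
  then obtain t where t: "(1 - q / 2) ^ t \<le> eps"
    using real_arch_pow_inv[OF assms(15), of "1 - q / 2"] by (auto intro: less_imp_le)
  have w_pos: "pmf prior E * data_lik B d s2 lam n D E > 0" if "E \<in> ?S" for n D E
    using that assms(11) data_lik_pos[OF assms(12,13)] by (simp add: pmf_positive)
  have w_zero: "pmf prior E * data_lik B d s2 lam n D E = 0" if "E \<notin> ?S" for n D E
    using that assms(11) by (simp add: pmf_eq_0_set_pmf)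
  have "bart_mix_time B d p0 pg pp pc ps m r 1 prior s2 lam eps n D \<le> enat t" for n D
    unfolding bart_mix_time_def bart_kernel_eq_mh_kernel[OF assms(12,13)]
      tempered_post_eq_weights_pmf[OF assms(12,13)] assms(11)
    using finite_TSE_space w_pos w_zero \<open>q > 0\<close> Q_ge t by (intro mix_time_lazy_mh_kernel_le) auto
  then have "bounded_in_probability (\<lambda>n. data_measure n \<nu> noise fstar)
      (\<lambda>n D. bart_mix_time B d p0 pg pp pc ps m r 1 prior s2 lam eps n D)"
    by (rule bounded_in_probability_if_bounded)
  then show ?thesis
    unfolding bounded_in_probability_def .
qed

end
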